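(* Let $p$ be an odd prime, $\alpha>1$ any integer with $\gcd(p,\alpha)=1$, and $\gamma=\operatorname{ord}_p(\alpha)$. Then for all positive integers $a,n$ with $a\geq \gamma p$, $$S_p^n(a)\leq 8\,\big(\log_p a\big)^{n-1}\, a^{\log_p\left(\frac{p+1}{2}\right)} .$$
   Context: A base-$p$ digit $d\in\{0,\dots,p-1\}$ is called small if $d<p/2$ and large otherwise. For integers $a,n\ge1$, $S_p^n(a)=\#\{0\le s<a : \text{the base-}p\text{ representation of }\alpha^s\text{ contains fewer than } n \text{ large digits}\}$ (this depends on the fixed $\alpha$). *)

theory Defs
  imports "HOL-Analysis.Analysis" "HOL-Number_Theory.Number_Theory"
begin

definition digit :: "nat \<Rightarrow> nat \<Rightarrow> nat \<Rightarrow> nat" where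
  "digit p m i = (m div p ^ i) mod p"

text \<open>A digit d is large iff d \<ge> p/2, i.e. 2 d \<ge> p. Leading zeros are small, so
  counting positions over all i is the same as over the actual representation.\<close>
definition num_large_digits :: "nat \<Rightarrow> nat \<Rightarrow> nat" where
  "num_large_digits p m = card {i. p \<le> 2 * digit p m i}"

definition S :: "nat \<Rightarrow> nat \<Rightarrow> nat \<Rightarrow> nat \<Rightarrow> nat" where
  "S p \<alpha> n a = card {s. s < a \<and> num_large_digits p (\<alpha> ^ s) < n}"

end

theory Submission
  imports Defs
begin

text \<open>Let \<open>\<gamma> = ord p \<alpha>\<close> and write \<open>\<alpha> ^ \<gamma> = 1 + p ^ v * w\<close> with \<open>p\<close> not dividing \<open>w\<close>.
  Since \<open>p\<close> is odd, lifting the exponent gives \<open>ord (p ^ (v + m)) \<alpha> = \<gamma> * p ^ m\<close>; choose \<open>m\<close>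
  with \<open>\<gamma> * p ^ m \<le> a < \<gamma> * p ^ (m + 1)\<close>. The digits of \<open>\<alpha> ^ s\<close> below position \<open>v\<close> depend
  only on \<open>s mod \<gamma>\<close>, so \<open>s\<close> is determined by \<open>s mod \<gamma>\<close>, \<open>s div (\<gamma> * p ^ m)\<close> and the block of
  digits at positions \<open>v, \<dots>, v + m - 1\<close>, and that block has fewer than \<open>n\<close> large digits if
  \<open>\<alpha> ^ s\<close> has. Such a block is determined by the set of its large positions and its digits
  modulo \<open>(p + 1) / 2\<close>, which leaves at most \<open>2 m ^ (n - 1) ((p + 1) / 2) ^ m\<close> blocks. Finally
  \<open>((p + 1) / 2) ^ m = (p ^ m) powr c\<close> for \<open>c = log p ((p + 1) / 2)\<close>, and concavity of
  \<open>x powr c\<close> bounds \<open>\<gamma> \<lceil>a / (\<gamma> p ^ m)\<rceil>\<close> by \<open>4 (a / p ^ m) powr c\<close>.\<close>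

section \<open>Lifting the exponent\<close>

lemma one_plus_power_expansion:
  fixes X :: "'a::comm_ring_1"
  shows "\<exists>R. (1 + X) ^ k = 1 + of_nat k * X + of_nat (k choose 2) * X\<^sup>2 + X ^ 3 * R"
proof (induction k)
  case 0
  show ?case by (rule exI[of _ 0]) (simp add: numeral_2_eq_2)
next
  case (Suc k)
  then obtain R where R: "(1 + X) ^ k = 1 + of_nat k * X + of_nat (k choose 2) * X\<^sup>2 + X ^ 3 * R"
    by blast
  have "Suc k choose 2 = k + (k choose 2)"
    by (simp add: numeral_2_eq_2)
  then have "(1 + X) ^ Suc k = 1 + of_nat (Suc k) * X + of_nat (Suc k choose 2) * X\<^sup>2
      + X ^ 3 * (of_nat (k choose 2) + R + R * X)"
    using R by (simp add: algebra_simps power2_eq_square power3_eq_cube)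
  then show ?case by blast
qed

lemma one_plus_prime_power_pow_prime:
  fixes x :: int
  assumes "prime p" "odd p" "1 \<le> u"
  shows "\<exists>z. (1 + int p ^ u * x) ^ p = 1 + int p ^ (u + 1) * (x + int p * z)"
proof -
  have "p \<noteq> 2" using assms(2) by auto
  then have "p dvd (p choose 2)"
    using assms(1) prime_ge_2_nat[of p] by (intro dvd_choose_prime) auto
  then obtain c where c: "p choose 2 = p * c" by blast
  obtain R where R: "(1 + int p ^ u * x) ^ p = 1 + int p * (int p ^ u * x)
      + int (p choose 2) * (int p ^ u * x)\<^sup>2 + (int p ^ u * x) ^ 3 * R"
    using one_plus_power_expansion by blast
  obtain u' where u': "u = Suc u'" using assms(3) by (cases u) auto
  \<comment> \<open>the quadratic and the cubic term are divisible by \<open>p ^ (u + 2)\<close>,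
    the former because \<open>p dvd p choose 2\<close>\<close>
  have "(1 + int p ^ u * x) ^ p
      = 1 + int p ^ (u + 1) * (x + int p * (int c * int p ^ u' * x\<^sup>2 + int p ^ u' * int p ^ u' * x ^ 3 * R))"
    unfolding R c by (simp add: u' algebra_simps power2_eq_square power3_eq_cube power_add)
  then show ?thesis by blast
qed

lemma one_plus_prime_power_pow_prime_power:
  fixes x :: int
  assumes "prime p" "odd p" "1 \<le> u" "\<not> int p dvd x"
  shows "\<exists>y. (1 + int p ^ u * x) ^ (p ^ j) = 1 + int p ^ (u + j) * y \<and> \<not> int p dvd y"
proof (induction j)
  case 0
  show ?case using assms(4) by auto
next
  case (Suc j)
  then obtain y where y: "(1 + int p ^ u * x) ^ (p ^ j) = 1 + int p ^ (u + j) * y" "\<not> int p dvd y"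
    by blast
  obtain z where z: "(1 + int p ^ (u + j) * y) ^ p = 1 + int p ^ (u + j + 1) * (y + int p * z)"
    using one_plus_prime_power_pow_prime[OF assms(1,2)] assms(3) by fastforce
  have "(1 + int p ^ u * x) ^ (p ^ Suc j) = ((1 + int p ^ u * x) ^ (p ^ j)) ^ p"
    by (simp add: power_mult[symmetric] mult.commute)
  moreover have "\<not> int p dvd y + int p * z"
    using y(2) by (simp add: dvd_add_left_iff)
  ultimately show ?case using y(1) z by auto
qed

lemma ord_prime_power_one_plus:
  fixes w :: int
  assumes "prime p" "odd p" "1 \<le> v" "\<not> int p dvd w" "int \<beta> = 1 + int p ^ v * w"
  shows "ord (p ^ (v + m)) \<beta> = p ^ m"
proof -
  have cong_one_iff: "[\<beta> ^ p ^ j = 1] (mod p ^ (v + m)) \<longleftrightarrow> m \<le> j" if "j \<le> m" for j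
  proof -
    obtain y where y: "int \<beta> ^ p ^ j = 1 + int p ^ (v + j) * y" "\<not> int p dvd y"
      using one_plus_prime_power_pow_prime_power[OF assms(1-4)] assms(5) by (metis of_nat_power)
    have "[\<beta> ^ p ^ j = 1] (mod p ^ (v + m)) \<longleftrightarrow> int p ^ (v + m) dvd int p ^ (v + j) * y"
      by (simp add: cong_int_iff[symmetric] cong_iff_dvd_diff y(1))
    also have "\<dots> \<longleftrightarrow> m \<le> j"
    proof
      assume dvd: "int p ^ (v + m) dvd int p ^ (v + j) * y"
      show "m \<le> j"
      proof (rule ccontr)
        assume "\<not> m \<le> j"
        then have "int p ^ Suc (v + j) dvd int p ^ (v + m)"
          by (intro le_imp_power_dvd) simp
        then have "int p ^ (v + j) * int p dvd int p ^ (v + j) * y"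
          using dvd unfolding power_Suc2 by (rule dvd_trans)
        then show False
          using y(2) assms(1) by (simp add: prime_gt_0_nat)
      qed
    qed (use that in simp)
    finally show ?thesis .
  qed
  obtain i where i: "i \<le> m" "ord (p ^ (v + m)) \<beta> = p ^ i"
    using cong_one_iff[of m] divides_primepow_nat[OF assms(1)] by (auto simp: ord_divides')
  have "\<not> i < m"
  proof
    assume "i < m"
    then have "ord (p ^ (v + m)) \<beta> dvd p ^ (m - 1)"
      using i(2) by (simp add: le_imp_power_dvd)
    then show False
      using cong_one_iff[of "m - 1"] \<open>i < m\<close> by (simp add: ord_divides')
  qed
  then show ?thesis using i by simp
qed

lemma ord_prime_power_lift:
  assumes "prime p" "odd p" "1 < \<alpha>" "coprime p \<alpha>"
  obtains v where "[\<alpha> ^ ord p \<alpha> = 1] (mod p ^ v)" "\<And>m. ord (p ^ (v + m)) \<alpha> = ord p \<alpha> * p ^ m"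
proof -
  define \<gamma> where "\<gamma> = ord p \<alpha>"
  define v where "v = multiplicity p (\<alpha> ^ \<gamma> - 1)"
  have "0 < \<gamma>" using assms(4) by (simp add: \<gamma>_def)
  then have \<beta>: "1 < \<alpha> ^ \<gamma>" using assms(3) by (metis One_nat_def one_less_power)
  have nonzero: "\<alpha> ^ \<gamma> - 1 \<noteq> 0" and "\<not> is_unit p"
    using \<beta> assms(1) by auto
  then obtain w where w: "\<alpha> ^ \<gamma> - 1 = p ^ v * w" "\<not> p dvd w"
    unfolding v_def by (rule multiplicity_decompose')
  have "p dvd \<alpha> ^ \<gamma> - 1"
    unfolding \<gamma>_def by (rule cong_to_1_nat[OF ord])
  then have v: "1 \<le> v"
    using prime_multiplicity_gt_zero_iff[OF prime_imp_prime_elem[OF assms(1)] nonzero]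
    by (simp add: v_def)
  have cong: "[\<alpha> ^ \<gamma> = 1] (mod p ^ v)"
    using w(1) \<beta> by (simp add: cong_altdef_nat)
  have "\<alpha> ^ \<gamma> = 1 + p ^ v * w"
    using w(1) \<beta> by linarith
  then have int_eq: "int (\<alpha> ^ \<gamma>) = 1 + int p ^ v * int w"
    by simp
  have "ord (p ^ (v + m)) \<alpha> = \<gamma> * p ^ m" for m
  proof -
    define d where "d = ord (p ^ (v + m)) \<alpha>"
    have "p dvd p ^ (v + m)"
      using v by (simp add: dvd_power)
    then have "[\<alpha> ^ d = 1] (mod p)"
      unfolding d_def by (rule cong_dvd_modulus_nat[OF ord])
    then have "\<gamma> dvd d" by (simp add: \<gamma>_def ord_divides')
    have "p ^ m = ord (p ^ (v + m)) (\<alpha> ^ \<gamma>)"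
      using w(2) by (intro ord_prime_power_one_plus[OF assms(1,2) v _ int_eq, symmetric]) simp
    also have "\<dots> = d div \<gamma>"
      using ord_power[of "p ^ (v + m)" \<alpha> \<gamma>] assms(4) \<open>\<gamma> dvd d\<close>
      by (simp add: d_def gcd_nat.absorb1 coprime_commute)
    finally show ?thesis using \<open>\<gamma> dvd d\<close> by (simp add: d_def)
  qed
  with cong show ?thesis using that unfolding \<gamma>_def by blast
qed

section \<open>Blocks of base-\<open>p\<close> digits\<close>

lemma digit_eq_0: "x < p ^ i \<Longrightarrow> digit p x i = 0"
  by (simp add: digit_def)

lemma large_digits_subset:
  assumes "0 < p" "x < p ^ m"
  shows "{i. p \<le> 2 * digit p x i} \<subseteq> {..<m}"
proof
  fix i assume i: "i \<in> {i. p \<le> 2 * digit p x i}"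
  show "i \<in> {..<m}"
  proof (rule ccontr)
    assume "i \<notin> {..<m}"
    then have "p ^ m \<le> p ^ i"
      using assms(1) by (simp add: power_increasing)
    then have "x < p ^ i"
      using assms(2) by simp
    then show False using i assms(1) by (simp add: digit_eq_0)
  qed
qed

lemma finite_large_digits:
  assumes "2 \<le> p"
  shows "finite {i. p \<le> 2 * digit p x i}"
proof -
  have "(2::nat) ^ x \<le> p ^ x"
    using assms by (simp add: power_mono)
  then have "x < p ^ x"
    using less_exp[of x] by (rule order_less_le_trans[rotated])
  then show ?thesis
    using assms by (intro finite_subset[OF large_digits_subset]) auto
qed

lemma digit_window:
  assumes "0 < p" "i < m"
  shows "digit p (x div p ^ v mod p ^ m) i = digit p x (v + i)"
proof -
  define y where "y = x div p ^ v"
  have "y mod p ^ m = y mod (p ^ i * p ^ (m - i))"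
    using assms(2) by (simp flip: power_add)
  then have "y mod p ^ m div p ^ i = y div p ^ i mod p ^ (m - i)"
    using assms(1) by (simp add: mod_mult2_eq)
  moreover have "p dvd p ^ (m - i)"
    using assms(2) by (simp add: dvd_power)
  ultimately show ?thesis
    by (simp add: digit_def y_def mod_mod_cancel div_mult2_eq power_add)
qed

lemma num_large_digits_window_le:
  assumes "2 \<le> p"
  shows "num_large_digits p (x div p ^ v mod p ^ m) \<le> num_large_digits p x"
proof -
  define L where "L = {i. p \<le> 2 * digit p (x div p ^ v mod p ^ m) i}"
  have "L \<subseteq> {..<m}"
    unfolding L_def using assms by (intro large_digits_subset) auto
  then have "(+) v ` L \<subseteq> {j. p \<le> 2 * digit p x j}"
    unfolding L_def using assms by (auto simp: digit_window)
  then have "card ((+) v ` L) \<le> num_large_digits p x"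
    unfolding num_large_digits_def using finite_large_digits[OF assms] by (rule card_mono[rotated])
  then show ?thesis
    by (simp add: L_def num_large_digits_def card_image)
qed

lemma inj_on_digits:
  assumes "0 < p"
  shows "inj_on (\<lambda>y. restrict (digit p y) {..<m}) {..<p ^ m}"
proof (induction m)
  case 0
  show ?case by (simp add: inj_on_def)
next
  case (Suc m)
  show ?case
  proof (rule inj_onI)
    fix y z assume y: "y \<in> {..<p ^ Suc m}" and z: "z \<in> {..<p ^ Suc m}"
      and eq: "restrict (digit p y) {..<Suc m} = restrict (digit p z) {..<Suc m}"
    have shift: "digit p (x div p) i = digit p x (Suc i)" for x i
      by (simp add: digit_def div_mult2_eq)
    have "digit p y i = digit p z i" if "i < Suc m" for i
      using fun_cong[OF eq, of i] that by simp
    then have "restrict (digit p (y div p)) {..<m} = restrict (digit p (z div p)) {..<m}"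
      by (intro restrict_ext) (simp add: shift)
    moreover have "y div p < p ^ m" "z div p < p ^ m"
      using y z assms by (auto simp: less_mult_imp_div_less mult.commute)
    ultimately have "y div p = z div p"
      using Suc.IH unfolding inj_on_def lessThan_iff by blast
    moreover have "y mod p = z mod p"
      using fun_cong[OF eq, of 0] by (simp add: digit_def)
    ultimately show "y = z" by (metis div_mult_mod_eq)
  qed
qed

lemma eq_if_large_iff_and_mod_eq:
  fixes d e p :: nat
  assumes "d < p" "e < p" "p \<le> 2 * d \<longleftrightarrow> p \<le> 2 * e"
    and "d mod ((p + 1) div 2) = e mod ((p + 1) div 2)"
  shows "d = e"
proof -
  have split: "x = (if p \<le> 2 * x then (p + 1) div 2 else 0) + x mod ((p + 1) div 2)" if "x < p" for x
    using that by (cases "p \<le> 2 * x") (auto simp: le_mod_geq)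
  show ?thesis
    using split[OF assms(1)] split[OF assms(2)] assms(3,4) by metis
qed

lemma inj_on_large_digits_and_digits_mod:
  assumes "2 \<le> p"
  shows "inj_on (\<lambda>y. ({i. p \<le> 2 * digit p y i}, restrict (\<lambda>i. digit p y i mod ((p + 1) div 2)) {..<m}))
    {..<p ^ m}"
proof (rule inj_onI)
  fix y z
  assume yz: "y \<in> {..<p ^ m}" "z \<in> {..<p ^ m}"
    and eq: "({i. p \<le> 2 * digit p y i}, restrict (\<lambda>i. digit p y i mod ((p + 1) div 2)) {..<m})
      = ({i. p \<le> 2 * digit p z i}, restrict (\<lambda>i. digit p z i mod ((p + 1) div 2)) {..<m})"
  have "digit p y i = digit p z i" if "i < m" for i
  proof (rule eq_if_large_iff_and_mod_eq)
    show "digit p y i < p" "digit p z i < p"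
      using assms by (simp_all add: digit_def)
    show "(p \<le> 2 * digit p y i) = (p \<le> 2 * digit p z i)"
      using eq by (auto simp: set_eq_iff)
    show "digit p y i mod ((p + 1) div 2) = digit p z i mod ((p + 1) div 2)"
      using eq that by (auto dest!: fun_cong[of _ _ i])
  qed
  then have "restrict (digit p y) {..<m} = restrict (digit p z) {..<m}"
    by (intro restrict_ext) simp
  then show "y = z"
    using assms yz by (intro inj_onD[OF inj_on_digits[of p m]]) auto
qed

lemma card_subsets_card_less:
  assumes "finite A"
  shows "card {J. J \<subseteq> A \<and> card J < n} = (\<Sum>j<n. card A choose j)"
proof -
  have "{J. J \<subseteq> A \<and> card J < n} = (\<Union>j<n. {J. J \<subseteq> A \<and> card J = j})"
    by auto
  also have "card \<dots> = (\<Sum>j<n. card {J. J \<subseteq> A \<and> card J = j})"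
    using assms by (intro card_UN_disjoint) auto
  finally show ?thesis
    using assms by (simp add: n_subsets)
qed

lemma card_few_large_digits_le:
  assumes "2 \<le> p"
  shows "card {y. y < p ^ m \<and> num_large_digits p y < n}
    \<le> (\<Sum>j<n. m choose j) * ((p + 1) div 2) ^ m"
proof -
  define h where "h = (p + 1) div 2"
  define B where "B = {y. y < p ^ m \<and> num_large_digits p y < n}"
  define \<J> where "\<J> = {J. J \<subseteq> {..<m} \<and> card J < n}"
  define code where "code y = ({i. p \<le> 2 * digit p y i}, restrict (\<lambda>i. digit p y i mod h) {..<m})" for y
  have "inj_on code B"
    unfolding code_def h_def using inj_on_large_digits_and_digits_mod[OF assms, of m]
    by (rule inj_on_subset) (auto simp: B_def)
  moreover have "code ` B \<subseteq> \<J> \<times> (\<Pi>\<^sub>E i\<in>{..<m}. {..<h})"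
  proof -
    have "{i. p \<le> 2 * digit p y i} \<in> \<J>" if "y \<in> B" for y
      using that large_digits_subset[of p y m] assms
      unfolding B_def \<J>_def num_large_digits_def by auto
    moreover have "restrict (\<lambda>i. digit p y i mod h) {..<m} \<in> (\<Pi>\<^sub>E i\<in>{..<m}. {..<h})" for y
      using assms by (simp add: restrict_PiE_iff h_def)
    ultimately show ?thesis
      unfolding code_def by blast
  qed
  moreover have "finite \<J>"
    unfolding \<J>_def by (rule finite_subset[of _ "Pow {..<m}"]) auto
  ultimately have "card B \<le> card (\<J> \<times> (\<Pi>\<^sub>E i\<in>{..<m}. {..<h}))"
    by (intro card_inj_on_le finite_cartesian_product finite_PiE) auto
  also have "\<dots> = (\<Sum>j<n. m choose j) * h ^ m"
    by (simp add: card_cartesian_product card_PiE \<J>_def card_subsets_card_less)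
  finally show ?thesis
    unfolding B_def h_def .
qed

lemma sum_binomial_le:
  assumes "1 \<le> m"
  shows "(\<Sum>j<Suc k. m choose j) \<le> 2 * m ^ k"
proof (induction k)
  case 0
  show ?case by simp
next
  case (Suc k)
  show ?case
  proof (cases "m = 1")
    case True
    then show ?thesis
      using Suc.IH by (cases k) simp_all
  next
    case False
    have "m choose Suc k \<le> m * m ^ k"
      using binomial_le_pow[of "Suc k" m] by (cases "Suc k \<le> m") (auto simp: binomial_eq_0)
    moreover have "2 * m ^ k \<le> m * m ^ k"
      using False assms by (intro mult_right_mono) auto
    moreover have "(\<Sum>j<Suc (Suc k). m choose j) = (\<Sum>j<Suc k. m choose j) + (m choose Suc k)"
      by simp
    ultimately show ?thesis
      using Suc.IH unfolding power_Suc by linarith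
  qed
qed

section \<open>Exponents with few large digits\<close>

lemma power_cong_power_mod:
  fixes \<alpha> :: nat
  assumes "[\<alpha> ^ \<gamma> = 1] (mod N)"
  shows "[\<alpha> ^ s = \<alpha> ^ (s mod \<gamma>)] (mod N)"
proof -
  have "[(\<alpha> ^ \<gamma>) ^ (s div \<gamma>) * \<alpha> ^ (s mod \<gamma>) = 1 ^ (s div \<gamma>) * \<alpha> ^ (s mod \<gamma>)] (mod N)"
    using assms by (intro cong_mult cong_pow cong_refl)
  then show ?thesis
    by (simp flip: power_mult power_add)
qed

lemma inj_power_window:
  assumes "coprime p \<alpha>" "[\<alpha> ^ \<gamma> = 1] (mod p ^ v)" "ord (p ^ (v + m)) \<alpha> = \<gamma> * p ^ m"
  shows "inj (\<lambda>s. (s mod \<gamma>, s div (\<gamma> * p ^ m), \<alpha> ^ s div p ^ v mod p ^ m))"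
proof (rule injI)
  fix s t
  assume "(s mod \<gamma>, s div (\<gamma> * p ^ m), \<alpha> ^ s div p ^ v mod p ^ m)
    = (t mod \<gamma>, t div (\<gamma> * p ^ m), \<alpha> ^ t div p ^ v mod p ^ m)"
  then have mod: "s mod \<gamma> = t mod \<gamma>" and div: "s div (\<gamma> * p ^ m) = t div (\<gamma> * p ^ m)"
    and window: "\<alpha> ^ s div p ^ v mod p ^ m = \<alpha> ^ t div p ^ v mod p ^ m"
    by simp_all
  have "[\<alpha> ^ s = \<alpha> ^ t] (mod p ^ v)"
    using power_cong_power_mod[OF assms(2), of s] power_cong_power_mod[OF assms(2), of t] mod
    by (metis cong_sym cong_trans)
  then have "\<alpha> ^ s mod p ^ (v + m) = \<alpha> ^ t mod p ^ (v + m)"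
    using window by (simp add: cong_def power_add mod_mult2_eq)
  then have "s mod (\<gamma> * p ^ m) = t mod (\<gamma> * p ^ m)"
    using order_divides_expdiff[of "p ^ (v + m)" \<alpha> s t] assms(1,3) by (simp add: cong_def)
  then show "s = t"
    using div by (metis div_mult_mod_eq)
qed

lemma S_le_card_few_large_digits:
  assumes "2 \<le> p" "coprime p \<alpha>" "[\<alpha> ^ \<gamma> = 1] (mod p ^ v)" "ord (p ^ (v + m)) \<alpha> = \<gamma> * p ^ m"
  shows "S p \<alpha> n a
    \<le> \<gamma> * ((a - 1) div (\<gamma> * p ^ m) + 1) * card {y. y < p ^ m \<and> num_large_digits p y < n}"
proof -
  define A where "A = {s. s < a \<and> num_large_digits p (\<alpha> ^ s) < n}"
  define B where "B = {y. y < p ^ m \<and> num_large_digits p y < n}"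
  define Q where "Q = (a - 1) div (\<gamma> * p ^ m) + 1"
  have "0 < \<gamma>"
    using assms(2,4) ord_eq_0[of "p ^ (v + m)" \<alpha>] by (auto simp: coprime_commute)
  have "(\<lambda>s. (s mod \<gamma>, s div (\<gamma> * p ^ m), \<alpha> ^ s div p ^ v mod p ^ m)) ` A \<subseteq> {..<\<gamma>} \<times> {..<Q} \<times> B"
  proof (rule image_subsetI)
    fix s assume "s \<in> A"
    then have "s < a"
      unfolding A_def by simp
    then have "s \<le> a - 1"
      by linarith
    then have "s div (\<gamma> * p ^ m) < Q"
      unfolding Q_def using div_le_mono by (simp add: less_Suc_eq_le)
    moreover have "\<alpha> ^ s div p ^ v mod p ^ m \<in> B"
      using \<open>s \<in> A\<close> num_large_digits_window_le[OF assms(1), of "\<alpha> ^ s" v m] assms(1)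
      unfolding A_def B_def by simp
    ultimately show "(s mod \<gamma>, s div (\<gamma> * p ^ m), \<alpha> ^ s div p ^ v mod p ^ m) \<in> {..<\<gamma>} \<times> {..<Q} \<times> B"
      using \<open>0 < \<gamma>\<close> by simp
  qed
  then have "card A \<le> card ({..<\<gamma>} \<times> {..<Q} \<times> B)"
    using inj_power_window[OF assms(2-4)]
    by (intro card_inj_on_le) (auto intro: inj_on_subset simp: B_def)
  also have "\<dots> = \<gamma> * Q * card B"
    by (simp add: card_cartesian_product)
  finally show ?thesis
    unfolding S_def A_def B_def Q_def .
qed

lemma ex_mult_power_ivl:
  fixes p \<gamma> a :: nat
  assumes "2 \<le> p" "0 < \<gamma>" "\<gamma> * p \<le> a"
  obtains m where "1 \<le> m" "\<gamma> * p ^ m \<le> a" "a < \<gamma> * p ^ (m + 1)"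
proof -
  have "p \<le> a div \<gamma>"
    using assms by (simp add: less_eq_div_iff_mult_less_eq mult.commute)
  then obtain m where m: "p ^ m \<le> a div \<gamma>" "a div \<gamma> < p ^ (m + 1)"
    using ex_power_ivl1[OF assms(1), of "a div \<gamma>"] assms(1) by auto
  have "1 \<le> m"
    using m(2) \<open>p \<le> a div \<gamma>\<close> by (cases m) auto
  moreover have "\<gamma> * p ^ m \<le> a"
    using m(1) assms(2) by (simp add: less_eq_div_iff_mult_less_eq mult.commute)
  moreover have "a < \<gamma> * p ^ (m + 1)"
    using m(2) assms(2) by (simp add: div_less_iff_less_mult mult.commute)
  ultimately show ?thesis
    using that by blast
qed

section \<open>The real estimate\<close>

lemma concave_on_powr:
  assumes "0 \<le> c" "c \<le> 1" "convex I" "I \<subseteq> {0<..}"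
  shows "concave_on I (\<lambda>x::real. x powr c)"
proof (rule f''_le0_imp_concave)
  fix x :: real assume "x \<in> I"
  then show "((\<lambda>x. x powr c) has_real_derivative c * x powr (c - 1)) (at x)"
    and "((\<lambda>x. c * x powr (c - 1)) has_real_derivative c * ((c - 1) * x powr (c - 1 - 1))) (at x)"
    using assms(4) by (auto intro!: derivative_eq_intros has_real_derivative_powr)
  show "c * ((c - 1) * x powr (c - 1 - 1)) \<le> 0"
    using assms by (intro mult_nonneg_nonpos mult_nonpos_nonneg) auto
qed (rule assms(3))

lemma one_plus_le_two_powr_log:
  fixes p \<theta> :: real
  assumes "1 < p" "1 \<le> \<theta>" "\<theta> \<le> p"
  shows "\<theta> + 1 \<le> 2 * \<theta> powr log p ((p + 1) / 2)"
proof -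
  define c where "c = log p ((p + 1) / 2)"
  have "concave_on {1..p} (\<lambda>x. x powr c)"
    using assms(1) by (intro concave_on_powr) (auto simp: c_def)
  \<comment> \<open>the chord from \<open>(1, 1)\<close> to \<open>(p, (p + 1) / 2)\<close> takes the value
    \<open>(\<theta> + 1) / 2\<close> at \<open>\<theta>\<close>\<close>
  have "(\<theta> + 1) / 2 = (p powr c - 1 powr c) / (p - 1) * (\<theta> - 1) + 1 powr c"
    using assms(1) by (simp add: c_def field_simps)
  also have "\<dots> \<le> \<theta> powr c"
    using \<open>concave_on {1..p} (\<lambda>x. x powr c)\<close> assms by (intro concave_onD_Icc') auto
  finally show ?thesis
    unfolding c_def by simp
qed

lemma add_le_four_powr_log:
  fixes p g x :: real
  assumes "1 < p" "1 \<le> g" "g \<le> p" "g \<le> x" "x \<le> g * p"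
  shows "g + x \<le> 4 * x powr log p ((p + 1) / 2)"
proof -
  define c where "c = log p ((p + 1) / 2)"
  have c: "c \<le> 1" "p powr c = (p + 1) / 2"
    using assms(1) by (simp_all add: c_def)
  have "g + x = g * (x / g + 1)"
    using assms(2) by (simp add: field_simps)
  also have "\<dots> \<le> g * (2 * (x / g) powr c)"
    using one_plus_le_two_powr_log[OF assms(1), of "x / g"] assms(2-5)
    by (intro mult_left_mono) (simp_all add: c_def field_simps)
  also have "\<dots> = 2 * g powr (1 - c) * x powr c"
    using assms(2,4) by (simp add: powr_divide powr_diff field_simps)
  also have "\<dots> \<le> 2 * p powr (1 - c) * x powr c"
    using assms(2,3) c(1) by (intro mult_right_mono mult_left_mono powr_mono2) auto
  also have "p powr (1 - c) = 2 * p / (p + 1)"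
    using assms(1) by (simp add: powr_diff c(2) field_simps)
  also have "2 * (2 * p / (p + 1)) * x powr c \<le> 4 * x powr c"
    using assms(1) by (intro mult_right_mono) (simp_all add: field_simps)
  finally show ?thesis
    unfolding c_def .
qed

lemma add_mult_half_succ_power_le:
  fixes p g a :: real
  assumes "1 < p" "1 \<le> g" "g \<le> p" "g * p ^ m \<le> a" "a \<le> g * p ^ (m + 1)"
  shows "(a / p ^ m + g) * ((p + 1) / 2) ^ m \<le> 4 * a powr log p ((p + 1) / 2)"
proof -
  define c where "c = log p ((p + 1) / 2)"
  have "0 < p ^ m" "0 < a"
    using assms(1,2,4) by (simp_all add: order_less_le_trans[OF _ assms(4)])
  have "(p ^ m) powr c = (p powr c) ^ m"
    using assms(1) by (simp add: powr_power powr_powr mult.commute flip: powr_realpow)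
  also have "\<dots> = ((p + 1) / 2) ^ m"
    using assms(1) by (simp add: c_def)
  finally have pm: "(p ^ m) powr c = ((p + 1) / 2) ^ m" .
  have "a / p ^ m + g \<le> 4 * (a / p ^ m) powr c"
    using add_le_four_powr_log[OF assms(1-3), of "a / p ^ m"] assms(4,5) \<open>0 < p ^ m\<close>
    by (simp add: c_def field_simps)
  then have "(a / p ^ m + g) * ((p + 1) / 2) ^ m \<le> 4 * (a / p ^ m) powr c * ((p + 1) / 2) ^ m"
    using assms(1) by (intro mult_right_mono) simp_all
  also have "\<dots> = 4 * (a / p ^ m) powr c * (p ^ m) powr c"
    by (simp only: pm)
  also have "\<dots> = 4 * a powr c"
    using \<open>0 < p ^ m\<close> \<open>0 < a\<close> assms(1) by (simp add: powr_divide)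
  finally show ?thesis
    unfolding c_def .
qed

lemma real_mult_div_ceiling_le:
  assumes "0 < M"
  shows "real g * real ((a - 1) div (g * M) + 1) \<le> real a / real M + real g"
proof -
  have "real ((a - 1) div (g * M) * (g * M)) \<le> real a"
    using div_times_less_eq_dividend[of "a - 1" "g * M"] by linarith
  then have "real g * real ((a - 1) div (g * M)) \<le> real a / real M"
    using assms by (simp add: field_simps)
  then show ?thesis
    by (simp add: algebra_simps)
qed

lemma ceil_count_le_powr_log:
  fixes p \<gamma> m a n :: nat
  assumes "2 \<le> p" "odd p" "1 \<le> \<gamma>" "\<gamma> \<le> p" "1 \<le> a" "\<gamma> * p ^ m \<le> a" "a < \<gamma> * p ^ (m + 1)"
  shows "real (\<gamma> * ((a - 1) div (\<gamma> * p ^ m) + 1) * (2 * m ^ (n - 1) * ((p + 1) div 2) ^ m))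
    \<le> 8 * log p a ^ (n - 1) * a powr log p ((real p + 1) / 2)"
proof -
  define Q where "Q = (a - 1) div (\<gamma> * p ^ m) + 1"
  define h where "h = (real p + 1) / 2"
  have "p ^ m \<le> a"
    using assms(3,6) by (metis mult_1 mult_le_mono1 order_trans)
  then have "real p powr real m \<le> real a"
    using assms(1) by (simp add: powr_realpow flip: of_nat_power)
  then have m_le_log: "real m \<le> log p a"
    using assms(1,5) by (subst le_log_iff) auto
  have "real ((p + 1) div 2) = h"
    using assms(2) by (auto simp: h_def elim!: oddE)
  then have "real (\<gamma> * Q * (2 * m ^ (n - 1) * ((p + 1) div 2) ^ m))
      = real \<gamma> * real Q * h ^ m * (2 * real m ^ (n - 1))"
    by (simp flip: \<open>real ((p + 1) div 2) = h\<close>)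
  also have "\<dots> \<le> (real a / real p ^ m + real \<gamma>) * h ^ m * (2 * log p a ^ (n - 1))"
  proof (rule mult_mono)
    show "real \<gamma> * real Q * h ^ m \<le> (real a / real p ^ m + real \<gamma>) * h ^ m"
      using real_mult_div_ceiling_le[of "p ^ m" \<gamma> a] assms(1) unfolding Q_def
      by (intro mult_right_mono) (simp_all add: h_def)
    show "2 * real m ^ (n - 1) \<le> 2 * log p a ^ (n - 1)"
      using m_le_log by (simp add: power_mono)
  qed (simp_all add: h_def)
  also have "\<dots> \<le> 4 * real a powr log p h * (2 * log p a ^ (n - 1))"
  proof (rule mult_right_mono)
    show "(real a / real p ^ m + real \<gamma>) * h ^ m \<le> 4 * real a powr log p h"
      unfolding h_def using assms(1,3,4) of_nat_mono[OF assms(6)] of_nat_mono[OF less_imp_le[OF assms(7)]]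
      by (intro add_mult_half_succ_power_le) simp_all
  qed (use m_le_log in simp)
  also have "\<dots> = 8 * log p a ^ (n - 1) * real a powr log p h"
    by simp
  finally show ?thesis
    unfolding Q_def h_def .
qed

theorem theorem2p9:
  fixes p \<alpha> a n :: nat
  assumes "prime p" and "odd p" and "\<alpha> > 1" and "coprime p \<alpha>"
    and "a \<ge> 1" and "n \<ge> 1"
    and "a \<ge> ord p \<alpha> * p"
  shows "real (S p \<alpha> n a) \<le>
    8 * (log (real p) (real a)) ^ (n - 1) * (real a) powr (log (real p) ((real p + 1) / 2))"
proof -
  define \<gamma> where "\<gamma> = ord p \<alpha>"
  have p: "2 \<le> p"
    using assms(1) by (rule prime_ge_2_nat)
  have \<gamma>: "1 \<le> \<gamma>" "\<gamma> \<le> p"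
    using assms(4) order_divides_totient[OF assms(4)] totient_prime[OF assms(1)] p
    by (auto simp: \<gamma>_def Suc_le_eq dest: dvd_imp_le)
  obtain m where m: "1 \<le> m" "\<gamma> * p ^ m \<le> a" "a < \<gamma> * p ^ (m + 1)"
    using ex_mult_power_ivl[OF p] \<gamma>(1) assms(7) unfolding \<gamma>_def by (metis One_nat_def Suc_le_eq)
  obtain v where v: "[\<alpha> ^ \<gamma> = 1] (mod p ^ v)" "ord (p ^ (v + m)) \<alpha> = \<gamma> * p ^ m"
    using ord_prime_power_lift[OF assms(1-4)] unfolding \<gamma>_def by metis
  have "S p \<alpha> n a \<le> \<gamma> * ((a - 1) div (\<gamma> * p ^ m) + 1) * ((\<Sum>j<n. m choose j) * ((p + 1) div 2) ^ m)"
    using S_le_card_few_large_digits[OF p assms(4) v] card_few_large_digits_le[OF p]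
    by (meson le_trans mult_le_mono2)
  also have "\<dots> \<le> \<gamma> * ((a - 1) div (\<gamma> * p ^ m) + 1) * (2 * m ^ (n - 1) * ((p + 1) div 2) ^ m)"
    using sum_binomial_le[OF m(1), of "n - 1"] assms(6) by simp
  finally have "real (S p \<alpha> n a)
      \<le> real (\<gamma> * ((a - 1) div (\<gamma> * p ^ m) + 1) * (2 * m ^ (n - 1) * ((p + 1) div 2) ^ m))"
    by (rule of_nat_mono)
  also have "\<dots> \<le> 8 * log p a ^ (n - 1) * a powr log p ((real p + 1) / 2)"
    by (rule ceil_count_le_powr_log[OF p assms(2) \<gamma> assms(5) m(2,3)])
  finally show ?thesis .
qed

end
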